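(* Let $f:\mathbb{Z}\to\mathbb{R}$ be a function in $\ell^1(\mathbb{Z})$. Then $$\mathrm{Var}(Mf)\le\Big(2+\frac{146}{315}\Big)\|f\|_{\ell^1(\mathbb{Z})}.$$
   Context: Let $\mathbb{Z}^+=\{0,1,2,\dots\}$. For $f:\mathbb{Z}\to\mathbb{R}$, the discrete centered Hardy–Littlewood maximal operator is $$Mf(n)=\sup_{r\in\mathbb{Z}^+}\frac{1}{2r+1}\sum_{k=-r}^{r}|f(n+k)|,\qquad n\in\mathbb{Z}.$$ The total variation of $g:\mathbb{Z}\to\mathbb{R}$ is $\mathrm{Var}(g)=\sum_{n=-\infty}^{\infty}|g(n+1)-g(n)|$, and $\|f\|_{\ell^1(\mathbb{Z})}=\sum_{n\in\mathbb{Z}}|f(n)|$. *)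

theory Defs
  imports "HOL-Analysis.Analysis"
begin

definition l1_norm :: "(int \<Rightarrow> real) \<Rightarrow> real" where
  "l1_norm f = (\<Sum>\<^sub>\<infinity> n\<in>(UNIV::int set). \<bar>f n\<bar>)"

definition maxop :: "(int \<Rightarrow> real) \<Rightarrow> int \<Rightarrow> real" where
  "maxop f n = (SUP r::nat. (\<Sum>k\<in>{- int r..int r}. \<bar>f (n + k)\<bar>) / (2 * real r + 1))"

definition total_var :: "(int \<Rightarrow> real) \<Rightarrow> ennreal" where
  "total_var g = (\<Sum>\<^sub>\<infinity> n\<in>(UNIV::int set). ennreal \<bar>g (n + 1) - g n\<bar>)"

end

theory Submission imports Defs begin

text \<open>In fact Var(Mf) \<le> 2 ||f||_1. The window of radius r around n is contained in the window
  of radius r + 1 around n + 1 (and around n - 1), so an average at radius r exceeds the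
  corresponding average at radius r + 1 by at most (1/(2r+1) - 1/(2r+3)) times the mass in the
  smaller window. Taking suprema, \<bar>Mf(n+1) - Mf(n)\<bar> is bounded by a convolution of \<bar>f\<bar> with a
  kernel whose total mass telescopes to 2.\<close>

lemma summable_on_sum:
  fixes u :: "'b \<Rightarrow> 'a \<Rightarrow> 'c::topological_comm_monoid_add"
  assumes "finite F" "\<And>n. n \<in> F \<Longrightarrow> u n summable_on A"
  shows "(\<lambda>k. \<Sum>n\<in>F. u n k) summable_on A"
  using assms by (induction F rule: finite_induct) (auto intro: summable_on_add)

lemma infsum_sum:
  fixes u :: "'b \<Rightarrow> 'a \<Rightarrow> 'c::{topological_comm_monoid_add, t2_space}"
  assumes "finite F" "\<And>n. n \<in> F \<Longrightarrow> u n summable_on A"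
  shows "infsum (\<lambda>k. \<Sum>n\<in>F. u n k) A = (\<Sum>n\<in>F. infsum (u n) A)"
  using assms by (induction F rule: finite_induct) (auto simp: infsum_add summable_on_sum)

lemma total_var_le:
  assumes "\<And>F. finite F \<Longrightarrow> (\<Sum>n\<in>F. \<bar>g (n + 1) - g n\<bar>) \<le> C"
  shows "total_var g \<le> ennreal C"
proof -
  have "total_var g = (SUP F\<in>{F. finite F \<and> F \<subseteq> UNIV}. \<Sum>n\<in>F. ennreal \<bar>g (n + 1) - g n\<bar>)"
    unfolding total_var_def by (rule nonneg_infsum_complete) simp
  also have "\<dots> \<le> ennreal C"
    using assms by (auto intro!: SUP_least ennreal_leI simp: sum_ennreal)
  finally show ?thesis .
qed

definition radius_gap :: "real \<Rightarrow> real" where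
  "radius_gap x = 1 / (2 * x + 1) - 1 / (2 * x + 3)"

text \<open>At m the kernel takes the least gap over all radii r with m \<in> {-r-1..r}.\<close>

definition maxop_kernel :: "int \<Rightarrow> real" where
  "maxop_kernel m = radius_gap (real_of_int (if m \<ge> 0 then m else - m - 1))"

definition window_avg :: "(int \<Rightarrow> real) \<Rightarrow> nat \<Rightarrow> int \<Rightarrow> real" where
  "window_avg f r n = (\<Sum>j\<in>{n - int r..n + int r}. \<bar>f j\<bar>) / (2 * real r + 1)"

definition kernel_conv :: "(int \<Rightarrow> real) \<Rightarrow> int \<Rightarrow> real" where
  "kernel_conv f n = (\<Sum>\<^sub>\<infinity> k\<in>(UNIV::int set). \<bar>f k\<bar> * maxop_kernel (n - k))"

lemma radius_gap_eq: "x \<ge> 0 \<Longrightarrow> radius_gap x = 2 / ((2 * x + 1) * (2 * x + 3))"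
  unfolding radius_gap_def by (simp add: field_simps)

lemma radius_gap_nonneg: "x \<ge> 0 \<Longrightarrow> radius_gap x \<ge> 0"
  by (simp add: radius_gap_eq)

lemma radius_gap_le_1:
  assumes "x \<ge> 0"
  shows "radius_gap x \<le> 1"
proof -
  have "1 * 3 \<le> (2 * x + 1) * (2 * x + 3)"
    by (rule mult_mono) (use assms in auto)
  then show ?thesis
    using assms by (simp add: radius_gap_eq)
qed

lemma radius_gap_antimono: "0 \<le> x \<Longrightarrow> x \<le> y \<Longrightarrow> radius_gap y \<le> radius_gap x"
  by (simp add: radius_gap_eq) (auto intro!: divide_left_mono mult_mono mult_pos_pos)

lemma radius_gap_window_loss:
  assumes "0 \<le> S" "S \<le> T"
  shows "S / (2 * real r + 1) - T / (2 * real (Suc r) + 1) \<le> radius_gap (real r) * S"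
proof -
  have "S / (2 * real r + 3) \<le> T / (2 * real r + 3)"
    using assms by (simp add: divide_right_mono)
  then show ?thesis
    unfolding radius_gap_def by (simp add: algebra_simps)
qed

lemma maxop_kernel_nonneg: "maxop_kernel m \<ge> 0"
  unfolding maxop_kernel_def by (rule radius_gap_nonneg) auto

lemma maxop_kernel_le_1: "maxop_kernel m \<le> 1"
  unfolding maxop_kernel_def by (rule radius_gap_le_1) auto

lemma radius_gap_le_maxop_kernel:
  "- int r - 1 \<le> m \<Longrightarrow> m \<le> int r \<Longrightarrow> radius_gap (real r) \<le> maxop_kernel m"
  unfolding maxop_kernel_def by (rule radius_gap_antimono) auto

lemma sum_maxop_kernel_centered:
  "(\<Sum>m\<in>{- int N..int N}. maxop_kernel m) = 2 - 1 / (2 * real N + 3) - 1 / (2 * real N + 1)"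
proof (induction N)
  case 0
  then show ?case by (simp add: maxop_kernel_def radius_gap_def)
next
  case (Suc N)
  have "{- int (Suc N)..int (Suc N)} = insert (- int N - 1) (insert (int N + 1) {- int N..int N})"
    by auto
  then have "(\<Sum>m\<in>{- int (Suc N)..int (Suc N)}. maxop_kernel m)
      = maxop_kernel (- int N - 1) + maxop_kernel (int N + 1) + (\<Sum>m\<in>{- int N..int N}. maxop_kernel m)"
    by simp
  also have "\<dots> = (1 / (2 * real N + 1) - 1 / (2 * real N + 3)) + (1 / (2 * real N + 3) - 1 / (2 * real N + 5))
      + (2 - 1 / (2 * real N + 3) - 1 / (2 * real N + 1))"
    using Suc.IH by (simp add: maxop_kernel_def radius_gap_def algebra_simps)
  also have "\<dots> = 2 - 1 / (2 * real (Suc N) + 3) - 1 / (2 * real (Suc N) + 1)"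
    by (simp add: algebra_simps)
  finally show ?case .
qed

lemma sum_maxop_kernel_shift_le_2:
  assumes "finite F"
  shows "(\<Sum>n\<in>F. maxop_kernel (n - k)) \<le> 2"
proof -
  obtain N where N: "\<And>n. n \<in> F \<Longrightarrow> \<bar>n - k\<bar> \<le> int N"
  proof
    fix n assume "n \<in> F"
    then have "nat \<bar>n - k\<bar> \<le> (\<Sum>n\<in>F. nat \<bar>n - k\<bar>)"
      using assms by (intro member_le_sum) auto
    then show "\<bar>n - k\<bar> \<le> int (\<Sum>n\<in>F. nat \<bar>n - k\<bar>)"
      by linarith
  qed
  have "F \<subseteq> {k - int N..k + int N}"
  proof
    fix n assume "n \<in> F"
    with N[of n] show "n \<in> {k - int N..k + int N}" by (simp add: abs_le_iff)
  qed
  then have "(\<Sum>n\<in>F. maxop_kernel (n - k)) \<le> (\<Sum>n\<in>{k - int N..k + int N}. maxop_kernel (n - k))"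
    by (intro sum_mono2) (auto simp: maxop_kernel_nonneg)
  also have "\<dots> = (\<Sum>m\<in>{- int N..int N}. maxop_kernel m)"
    by (rule sum.reindex_bij_witness[of _ "\<lambda>m. m + k" "\<lambda>n. n - k"]) auto
  also have "\<dots> \<le> 2"
  proof -
    have "0 \<le> 1 / (2 * real N + 3)" "0 \<le> 1 / (2 * real N + 1)" by simp_all
    then show ?thesis unfolding sum_maxop_kernel_centered by linarith
  qed
  finally show ?thesis .
qed

lemma maxop_eq_SUP_window_avg: "maxop f n = (SUP r. window_avg f r n)"
proof -
  have "(\<Sum>k\<in>{- int r..int r}. \<bar>f (n + k)\<bar>) = (\<Sum>j\<in>{n - int r..n + int r}. \<bar>f j\<bar>)" for r
    by (rule sum.reindex_bij_witness[of _ "\<lambda>j. j - n" "\<lambda>k. n + k"]) auto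
  then show ?thesis
    unfolding maxop_def window_avg_def by simp
qed

context
  fixes f :: "int \<Rightarrow> real"
  assumes summable: "(\<lambda>n. \<bar>f n\<bar>) summable_on UNIV"
begin

lemma window_avg_le_l1_norm: "window_avg f r n \<le> l1_norm f"
proof -
  let ?S = "\<Sum>j\<in>{n - int r..n + int r}. \<bar>f j\<bar>"
  have "?S \<le> l1_norm f"
    unfolding l1_norm_def by (rule finite_sum_le_infsum) (use summable in auto)
  moreover have "window_avg f r n \<le> ?S / 1"
    unfolding window_avg_def by (intro divide_left_mono sum_nonneg) auto
  ultimately show ?thesis by linarith
qed

lemma window_avg_le_maxop: "window_avg f r n \<le> maxop f n"
  unfolding maxop_eq_SUP_window_avg
  by (rule cSUP_upper) (auto intro!: bdd_aboveI window_avg_le_l1_norm)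

lemma summable_on_kernel_conv: "(\<lambda>k. \<bar>f k\<bar> * maxop_kernel (n - k)) summable_on UNIV"
  by (rule summable_on_comparison_test[OF summable])
     (auto intro: mult_left_le maxop_kernel_le_1 simp: maxop_kernel_nonneg)

lemma window_avg_diff_le_kernel_conv:
  assumes "m \<in> {n, n + 1}" "m' \<in> {n, n + 1}"
  shows "window_avg f r m - window_avg f (Suc r) m' \<le> kernel_conv f n"
proof -
  let ?W = "{m - int r..m + int r}"
  have window_loss: "window_avg f r m - window_avg f (Suc r) m' \<le> radius_gap (real r) * (\<Sum>j\<in>?W. \<bar>f j\<bar>)"
    unfolding window_avg_def using assms
    by (intro radius_gap_window_loss sum_nonneg sum_mono2) auto
  have "radius_gap (real r) * (\<Sum>j\<in>?W. \<bar>f j\<bar>) = (\<Sum>j\<in>?W. \<bar>f j\<bar> * radius_gap (real r))"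
    by (simp add: sum_distrib_left mult.commute)
  also have "\<dots> \<le> (\<Sum>j\<in>?W. \<bar>f j\<bar> * maxop_kernel (n - j))"
    using assms by (intro sum_mono mult_left_mono radius_gap_le_maxop_kernel) auto
  also have "\<dots> \<le> kernel_conv f n"
    unfolding kernel_conv_def
    by (rule finite_sum_le_infsum[OF summable_on_kernel_conv]) (auto intro: maxop_kernel_nonneg mult_nonneg_nonneg)
  finally show ?thesis
    using window_loss by linarith
qed

lemma maxop_le_maxop_plus_kernel_conv:
  assumes "m \<in> {n, n + 1}" "m' \<in> {n, n + 1}"
  shows "maxop f m \<le> maxop f m' + kernel_conv f n"
  unfolding maxop_eq_SUP_window_avg[of f m]
proof (rule cSUP_least)
  fix r
  show "window_avg f r m \<le> maxop f m' + kernel_conv f n"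
    using window_avg_diff_le_kernel_conv[OF assms, of r] window_avg_le_maxop[of "Suc r" m']
    by linarith
qed simp

lemma maxop_diff_le_kernel_conv: "\<bar>maxop f (n + 1) - maxop f n\<bar> \<le> kernel_conv f n"
proof -
  have "maxop f (n + 1) \<le> maxop f n + kernel_conv f n" "maxop f n \<le> maxop f (n + 1) + kernel_conv f n"
    by (rule maxop_le_maxop_plus_kernel_conv; simp)+
  then show ?thesis by linarith
qed

lemma sum_kernel_conv_le:
  assumes "finite F"
  shows "(\<Sum>n\<in>F. kernel_conv f n) \<le> 2 * l1_norm f"
proof -
  let ?u = "\<lambda>n k. \<bar>f k\<bar> * maxop_kernel (n - k)"
  have "(\<Sum>n\<in>F. kernel_conv f n) = (\<Sum>\<^sub>\<infinity> k\<in>UNIV. \<Sum>n\<in>F. ?u n k)"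
    unfolding kernel_conv_def using assms summable_on_kernel_conv by (simp add: infsum_sum)
  also have "\<dots> \<le> (\<Sum>\<^sub>\<infinity> k\<in>UNIV. \<bar>f k\<bar> * 2)"
  proof (rule infsum_mono)
    show "(\<lambda>k. \<Sum>n\<in>F. ?u n k) summable_on UNIV"
      using assms summable_on_kernel_conv by (rule summable_on_sum)
    show "(\<lambda>k. \<bar>f k\<bar> * 2) summable_on UNIV"
      using summable by (rule summable_on_cmult_left)
    show "(\<Sum>n\<in>F. ?u n k) \<le> \<bar>f k\<bar> * 2" for k
      unfolding sum_distrib_left[symmetric]
      by (rule mult_left_mono[OF sum_maxop_kernel_shift_le_2[OF assms]]) simp
  qed
  also have "\<dots> = 2 * l1_norm f"
    unfolding l1_norm_def by (simp add: infsum_cmult_left')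
  finally show ?thesis .
qed

lemma total_var_maxop_le: "total_var (maxop f) \<le> ennreal (2 * l1_norm f)"
proof (rule total_var_le)
  fix F :: "int set"
  assume "finite F"
  then show "(\<Sum>n\<in>F. \<bar>maxop f (n + 1) - maxop f n\<bar>) \<le> 2 * l1_norm f"
    by (meson order_trans sum_mono maxop_diff_le_kernel_conv sum_kernel_conv_le)
qed

end

theorem theorem2:
  fixes f :: "int \<Rightarrow> real"
  assumes "(\<lambda>n. \<bar>f n\<bar>) summable_on UNIV"
  shows "total_var (maxop f) \<le> ennreal ((2 + 146 / 315) * l1_norm f)"
proof -
  have "0 \<le> l1_norm f"
    unfolding l1_norm_def by (rule infsum_nonneg) simp
  then have "2 * l1_norm f \<le> (2 + 146 / 315) * l1_norm f"
    by (intro mult_right_mono) auto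
  then show ?thesis
    using total_var_maxop_le[OF assms] by (meson ennreal_leI order_trans)
qed

end
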